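(* Let $Q=[s_-,s_+]\times[t_-,t_+]\subset\mathbb R^2$ and $X\in C^\infty(Q,V)$. Then for every $n\ge2$, $$\big\|\widehat R^{(n)}(X)\big\|\le C_n\,(|s_+-s_-|+|t_+-t_-|)^n,$$ where $C_n>0$ is a constant depending on $X$ and $n$.
   Context: $V$ is a finite-dimensional real Hilbert space with orthonormal basis $e_1,\dots,e_d$; $T_0(V)=\bigoplus_kV^{\otimes k}$ with words orthonormal. $\overline T_1(V)=T_0(V)\otimes\Lambda^2V\otimes T_0(V)$ graded by level ($V^{\otimes k}\otimes\Lambda^2V\otimes V^{\otimes(n-k-2)}$ is level $n$), orthonormal basis $e_{q_1}\cdots e_{q_k}\otimes(e_i\wedge e_j)\otimes e_{q_{k+1}}\cdots e_{q_{n-2}}$ ($i<j$), outer multiplication actions, $\delta(a\otimes(v\wedge w)\otimes b)=a(vw-wv)b$; $T_1(V)=\overline T_1(V)/\mathrm{Pf}$ with $\mathrm{Pf}=\mathrm{span}\{\delta(E)F-E\delta(F)\}$, level-$n$ part $T_1^{(n)}(V)$ identified with the orthogonal complement of $\mathrm{Pf}$ in level $n$ and normed accordingly; product $E*F=\delta(E)F=E\delta(F)$; on $\mathbb R\oplus\prod_{n\ge2}T_1^{(n)}(V)$, $(\lambda,E)*(\mu,F)=(\lambda\mu,\lambda F+\mu E+E*F)$; an invertible $g\in\prod_kV^{\otimes k}$ acts by $g\triangleright E=g\cdot E\cdot g^{-1}$. The path signature of smooth $x:[a,b]\to V$ is $S(x)=1+\sum_{m\ge1}\int_{a<u_1<\dots<u_m<b}dx_{u_1}\cdots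 dx_{u_m}$. For $(s,t)\in Q$ the tail path $x^{s,t}:[0,(s-s_-)+(t-t_-)]\to V$ is $x^{s,t}_u=X_{u+s_-,t_-}$ for $u\le s-s_-$ and $X_{s,u-(s-s_-)+t_-}$ otherwise; $J_{s,t}(X)=\sum_{i<j}(\partial_sX^i\partial_tX^j-\partial_sX^j\partial_tX^i)(s,t)\,e_i\wedge e_j\in\Lambda^2V=T_1^{(2)}(V)$. The surface signature is $\widehat R(X)=\widehat R_{s_+,t_+}(X)$ where $\partial_t\widehat R_{s,t}(X)=\widehat R_{s,t}(X)*\int_{s_-}^sS(x^{s',t})\triangleright J_{s',t}(X)\,ds'$, $\widehat R_{s,t_-}(X)=1$ (solved level by level); $\widehat R^{(n)}(X)\in T_1^{(n)}(V)$ is its level-$n$ component. *)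

theory Defs
  imports "HOL-Analysis.Analysis"
begin

text \<open>V = R^d with orthonormal basis e_0,...,e_{d-1}; a word is a list of letters < d.
  Elements of prod_k V^{\<otimes>k} are coefficient functions on words.\<close>

type_synonym word = "nat list"
type_synonym tens = "word \<Rightarrow> real"
text \<open>Index (k,i,j,w) of T1bar stands for the basis element
  (take k w) \<otimes> (e_i \<and> e_j) \<otimes> (drop k w), with i < j < d, k \<le> length w;
  its level is length w + 2.\<close>
type_synonym idx1 = "nat \<times> nat \<times> nat \<times> word"
type_synonym tens1 = "idx1 \<Rightarrow> real"

definition words :: "nat \<Rightarrow> nat \<Rightarrow> word set" where
  "words d n = {w. length w = n \<and> set w \<subseteq> {..<d}}"

definition idx1 :: "nat \<Rightarrow> nat \<Rightarrow> idx1 set" where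
  "idx1 d n = {(k,i,j,w). i < j \<and> j < d \<and> set w \<subseteq> {..<d} \<and> length w + 2 = n \<and> k \<le> length w}"

definition lvl1 :: "idx1 \<Rightarrow> nat" where
  "lvl1 = (\<lambda>(k,i,j,w). length w + 2)"

definition tmul :: "tens \<Rightarrow> tens \<Rightarrow> tens" where
  "tmul a b = (\<lambda>u. \<Sum>p\<le>length u. a (take p u) * b (drop p u))"

definition lact :: "tens \<Rightarrow> tens1 \<Rightarrow> tens1" where
  "lact a E = (\<lambda>(k,i,j,w). \<Sum>p\<le>k. a (take p w) * E (k - p, i, j, drop p w))"

definition ract :: "tens1 \<Rightarrow> tens \<Rightarrow> tens1" where
  "ract E b = (\<lambda>(k,i,j,w). \<Sum>q\<le>length w - k.
      E (k, i, j, take (length w - q) w) * b (drop (length w - q) w))"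

definition basis_delta :: "idx1 \<Rightarrow> word \<Rightarrow> real" where
  "basis_delta = (\<lambda>(k,i,j,w) u.
      (if u = take k w @ [i,j] @ drop k w then 1 else 0)
    - (if u = take k w @ [j,i] @ drop k w then 1 else 0))"

text \<open>delta(a \<otimes> (v\<and>w) \<otimes> b) = a(vw - wv)b\<close>
definition delta :: "nat \<Rightarrow> tens1 \<Rightarrow> tens" where
  "delta d E = (\<lambda>u. \<Sum>\<iota>\<in>idx1 d (length u). E \<iota> * basis_delta \<iota> u)"

definition pf_rel :: "nat \<Rightarrow> tens1 \<Rightarrow> tens1 \<Rightarrow> tens1" where
  "pf_rel d E F = (\<lambda>\<iota>. lact (delta d E) F \<iota> - ract E (delta d F) \<iota>)"

inductive_set Pf :: "nat \<Rightarrow> tens1 set" for d :: nat where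
  Pf_zero: "(\<lambda>\<iota>. 0) \<in> Pf d"
| Pf_add: "P \<in> Pf d \<Longrightarrow> Q \<in> Pf d \<Longrightarrow> (\<lambda>\<iota>. P \<iota> + Q \<iota>) \<in> Pf d"
| Pf_gen: "pf_rel d E F \<in> Pf d"

definition norm1 :: "nat \<Rightarrow> nat \<Rightarrow> tens1 \<Rightarrow> real" where
  "norm1 d n E = sqrt (\<Sum>\<iota>\<in>idx1 d n. (E \<iota>)\<^sup>2)"

text \<open>Norm on T_1^{(n)} (identified with the orthogonal complement of Pf in level n):
  the norm of the orthogonal projection of a representative = its distance to Pf.\<close>
definition qnorm :: "nat \<Rightarrow> nat \<Rightarrow> tens1 \<Rightarrow> real" where
  "qnorm d n E = Inf {norm1 d n (\<lambda>\<iota>. E \<iota> - P \<iota>) | P. P \<in> Pf d}"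

text \<open>inverse of g with g(empty word) = 1 in prod_k V^{\<otimes>k}\<close>
function tinv :: "tens \<Rightarrow> tens" where
  "tinv g u = (if u = [] then 1
     else - (\<Sum>p\<in>{1..length u}. g (take p u) * tinv g (drop p u)))"
  by auto
termination
  by (relation "Wellfounded.measure (\<lambda>(g,u). length u)") auto

definition act :: "tens \<Rightarrow> tens1 \<Rightarrow> tens1" where
  "act g E = ract (lact g E) (tinv g)"

text \<open>Path signature of x : [a,b] \<rightarrow> V (components x i), via iterated integrals;
  sigr takes the reversed word (outermost integration = last letter).\<close>
primrec sigr :: "(nat \<Rightarrow> real \<Rightarrow> real) \<Rightarrow> real \<Rightarrow> real \<Rightarrow> word \<Rightarrow> real" where
  "sigr x a b [] = 1"
| "sigr x a b (i # w) = integral {a..b} (\<lambda>u. sigr x a u w * deriv (x i) u)"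

definition sig :: "(nat \<Rightarrow> real \<Rightarrow> real) \<Rightarrow> real \<Rightarrow> real \<Rightarrow> tens" where
  "sig x a b = (\<lambda>w. sigr x a b (rev w))"

definition tailpath :: "(nat \<Rightarrow> real \<times> real \<Rightarrow> real) \<Rightarrow> real \<Rightarrow> real \<Rightarrow> real \<Rightarrow> real
    \<Rightarrow> nat \<Rightarrow> real \<Rightarrow> real" where
  "tailpath X sm tm s t = (\<lambda>i u. if u \<le> s - sm then X i (u + sm, tm)
                                  else X i (s, u - (s - sm) + tm))"

definition Jst :: "nat \<Rightarrow> (nat \<Rightarrow> real \<times> real \<Rightarrow> real) \<Rightarrow> real \<Rightarrow> real \<Rightarrow> tens1" where
  "Jst d X s t = (\<lambda>(k,i,j,w). if k = 0 \<and> w = [] \<and> i < j \<and> j < d then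
      deriv (\<lambda>s'. X i (s',t)) s * deriv (\<lambda>t'. X j (s,t')) t
    - deriv (\<lambda>s'. X j (s',t)) s * deriv (\<lambda>t'. X i (s,t')) t else 0)"

definition Fst :: "nat \<Rightarrow> (nat \<Rightarrow> real \<times> real \<Rightarrow> real) \<Rightarrow> real \<Rightarrow> real \<Rightarrow> real \<Rightarrow> real \<Rightarrow> tens1" where
  "Fst d X sm tm s t = (\<lambda>\<iota>. integral {sm..s}
      (\<lambda>s'. act (sig (tailpath X sm tm s' t) 0 ((s' - sm) + (t - tm))) (Jst d X s' t) \<iota>))"

text \<open>Level-by-level solution (representatives in T1bar) of
  d/dt E = F + E * F, E(tm) = 0, where R = 1 + E and E * F = delta(E) F.
  Rc n t contains the levels \<le> n.\<close>
primrec Rc :: "nat \<Rightarrow> (nat \<Rightarrow> real \<times> real \<Rightarrow> real) \<Rightarrow> real \<Rightarrow> real \<Rightarrow> real \<Rightarrow> nat \<Rightarrow> real \<Rightarrow> tens1" where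
  "Rc d X sm sp tm 0 t = (\<lambda>\<iota>. 0)"
| "Rc d X sm sp tm (Suc n) t = (\<lambda>\<iota>. if lvl1 \<iota> \<le> Suc n then
      integral {tm..t} (\<lambda>t'. Fst d X sm tm sp t' \<iota>
          + lact (delta d (Rc d X sm sp tm n t')) (Fst d X sm tm sp t') \<iota>)
    else 0)"

definition surf_sig :: "nat \<Rightarrow> (nat \<Rightarrow> real \<times> real \<Rightarrow> real) \<Rightarrow> real \<Rightarrow> real \<Rightarrow> real \<Rightarrow> real \<Rightarrow> nat \<Rightarrow> tens1" where
  "surf_sig d X sm sp tm tp n = Rc d X sm sp tm n tp"

fun pdiff :: "bool list \<Rightarrow> (real \<times> real \<Rightarrow> real) \<Rightarrow> real \<times> real \<Rightarrow> real" where
  "pdiff [] f = f"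
| "pdiff (b # bs) f = (\<lambda>(s,t). if b then deriv (\<lambda>s'. pdiff bs f (s',t)) s
                                else deriv (\<lambda>t'. pdiff bs f (s,t')) t)"

definition smooth_on :: "(real \<times> real) set \<Rightarrow> (real \<times> real \<Rightarrow> real) \<Rightarrow> bool" where
  "smooth_on U f \<longleftrightarrow> (\<forall>bs. continuous_on U (pdiff bs f) \<and>
     (\<forall>s t. (s,t) \<in> U \<longrightarrow> (\<lambda>s'. pdiff bs f (s',t)) differentiable (at s)
                         \<and> (\<lambda>t'. pdiff bs f (s,t')) differentiable (at t)))"

end

theory Submission
  imports Defs
begin

(* Every ingredient of the recursion defining the surface signature over [a,b] x [c,e] is
   controlled coefficientwise by powers of L = (b - a) + (e - c).  The tail paths have length
   at most L and speed bounded by the first partials of X, so their signatures g and the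
   inverses g^-1 have level-p coefficients O(L^p); J is O(1) and sits in level 2, hence
   g J g^-1 has level-m coefficients O(L^(m-2)).  The integrations in s and in t both run over
   intervals of length at most L and each gains one power of L, so induction on the truncation
   level gives O(L^m) for the level-m coefficients of the representative, and the quotient norm
   is at most the norm of any representative. *)

lemma abs_integral_le_bound:
  fixes f :: "real \<Rightarrow> real"
  assumes "a \<le> b" "0 \<le> B" "finite S" "\<And>x. x \<in> {a..b} - S \<Longrightarrow> \<bar>f x\<bar> \<le> B"
  shows "\<bar>integral {a..b} f\<bar> \<le> B * (b - a)"
proof (cases "f integrable_on {a..b}")
  case True
  have "norm (integral {a..b} f) \<le> B * Henstock_Kurzweil_Integration.content {a..b}"
    using assms(4) by (intro has_integral_bound_real[OF assms(2,3) integrable_integral[OF True]]) auto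
  then show ?thesis using assms(1) by simp
next
  case False
  then show ?thesis using assms by (simp add: not_integrable_integral)
qed

lemma sum_geometric_weights_le:
  fixes A :: real
  assumes "0 \<le> A"
  shows "(\<Sum>p=1..n. A ^ p * (2 * A) ^ (n - p)) \<le> (2 * A) ^ n"
proof -
  have "(\<Sum>p=1..n. A ^ p * (2 * A) ^ (n - p)) = A ^ n * (\<Sum>p=1..n. 2 ^ (n - p))"
    by (auto simp: sum_distrib_left power_mult_distrib power_add[symmetric] intro!: sum.cong)
  also have "(\<Sum>p=1..n. (2::real) ^ (n - p)) = (\<Sum>i<n. 2 ^ i)"
    by (rule sum.reindex_bij_witness[where i = "\<lambda>i. n - i" and j = "\<lambda>p. n - p"]) auto
  also have "\<dots> = 2 ^ n - 1"
    by (simp add: geometric_sum)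
  also have "A ^ n * (2 ^ n - 1) \<le> (2 * A) ^ n"
    using assms by (simp add: algebra_simps)
  finally show ?thesis .
qed

(* tinv.simps reappears inside its own right-hand side, so simp would unfold it forever. *)
declare tinv.simps [simp del]

lemma abs_tinv_le:
  assumes A: "0 \<le> A" and g: "\<And>w. set w \<subseteq> {..<d} \<Longrightarrow> \<bar>g w\<bar> \<le> A ^ length w"
  shows "set u \<subseteq> {..<d} \<Longrightarrow> \<bar>tinv g u\<bar> \<le> (2 * A) ^ length u"
proof (induction "length u" arbitrary: u rule: less_induct)
  case less
  show ?case
  proof (cases "u = []")
    case True
    then show ?thesis by (simp add: tinv.simps)
  next
    case False
    let ?n = "length u"
    have "\<bar>tinv g u\<bar> = \<bar>\<Sum>p=1..?n. g (take p u) * tinv g (drop p u)\<bar>"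
      using False by (simp add: tinv.simps[of g u])
    also have "\<dots> \<le> (\<Sum>p=1..?n. \<bar>g (take p u)\<bar> * \<bar>tinv g (drop p u)\<bar>)"
      unfolding abs_mult[symmetric] by (rule sum_abs)
    also have "\<dots> \<le> (\<Sum>p=1..?n. A ^ p * (2 * A) ^ (?n - p))"
    proof (rule sum_mono)
      fix p assume p: "p \<in> {1..?n}"
      have "set (take p u) \<subseteq> {..<d}" "set (drop p u) \<subseteq> {..<d}"
        using less.prems set_take_subset[of p u] set_drop_subset[of p u] by blast+
      moreover have "length (take p u) = p" "length (drop p u) = ?n - p" "length (drop p u) < ?n"
        using p by auto
      ultimately have "\<bar>g (take p u)\<bar> \<le> A ^ p" "\<bar>tinv g (drop p u)\<bar> \<le> (2 * A) ^ (?n - p)"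
        using g[of "take p u"] less.hyps[of "drop p u"] by simp_all
      then show "\<bar>g (take p u)\<bar> * \<bar>tinv g (drop p u)\<bar> \<le> A ^ p * (2 * A) ^ (?n - p)"
        using A by (intro mult_mono) auto
    qed
    also have "\<dots> \<le> (2 * A) ^ ?n"
      by (rule sum_geometric_weights_le[OF A])
    finally show ?thesis .
  qed
qed

definition tens_dominated :: "nat \<Rightarrow> (nat \<Rightarrow> real) \<Rightarrow> real \<Rightarrow> tens \<Rightarrow> bool" where
  "tens_dominated d \<alpha> L a \<longleftrightarrow> (\<forall>u. set u \<subseteq> {..<d} \<longrightarrow> \<bar>a u\<bar> \<le> \<alpha> (length u) * L ^ length u)"

(* Every index in idx1 has level at least 2, so the truncated subtraction m - r is exact
   for the shifts r \<le> 2 used below. *)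
definition tens1_dominated :: "nat \<Rightarrow> (nat \<Rightarrow> real) \<Rightarrow> real \<Rightarrow> nat \<Rightarrow> tens1 \<Rightarrow> bool" where
  "tens1_dominated d \<beta> L r E \<longleftrightarrow> (\<forall>m \<iota>. \<iota> \<in> idx1 d m \<longrightarrow> \<bar>E \<iota>\<bar> \<le> \<beta> m * L ^ (m - r))"

lemma tens_dominatedD:
  "tens_dominated d \<alpha> L a \<Longrightarrow> set u \<subseteq> {..<d} \<Longrightarrow> \<bar>a u\<bar> \<le> \<alpha> (length u) * L ^ length u"
  unfolding tens_dominated_def by blast

lemma tens1_dominatedD:
  "tens1_dominated d \<beta> L r E \<Longrightarrow> \<iota> \<in> idx1 d m \<Longrightarrow> \<bar>E \<iota>\<bar> \<le> \<beta> m * L ^ (m - r)"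
  unfolding tens1_dominated_def by blast

lemma idx1_level_ge2: "\<iota> \<in> idx1 d m \<Longrightarrow> 2 \<le> m"
  unfolding idx1_def by auto

lemma lact_dominated:
  assumes a: "tens_dominated d \<alpha> L a" and E: "tens1_dominated d \<beta> L r E"
    and "r \<le> 2" "0 \<le> L" "\<forall>p. 0 \<le> \<alpha> p" "\<forall>m. 0 \<le> \<beta> m"
  shows "tens1_dominated d (\<lambda>m. \<Sum>p\<le>m. \<alpha> p * \<beta> (m - p)) L r (lact a E)"
  unfolding tens1_dominated_def
proof (intro allI impI)
  fix m \<iota> assume "\<iota> \<in> idx1 d m"
  then obtain k i j w where \<iota>: "\<iota> = (k, i, j, w)" and w: "i < j" "j < d" "set w \<subseteq> {..<d}"
    "length w + 2 = m" "k \<le> length w"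
    unfolding idx1_def by auto
  have "\<bar>lact a E \<iota>\<bar> \<le> (\<Sum>p\<le>k. \<bar>a (take p w)\<bar> * \<bar>E (k - p, i, j, drop p w)\<bar>)"
    unfolding \<iota> lact_def abs_mult[symmetric] by simp
  also have "\<dots> \<le> (\<Sum>p\<le>k. \<alpha> p * \<beta> (m - p) * L ^ (m - r))"
  proof (rule sum_mono)
    fix p assume p: "p \<in> {..k}"
    have "set (take p w) \<subseteq> {..<d}" "set (drop p w) \<subseteq> {..<d}"
      using w(3) set_take_subset[of p w] set_drop_subset[of p w] by blast+
    then have "\<bar>a (take p w)\<bar> \<le> \<alpha> p * L ^ p"
      using tens_dominatedD[OF a, of "take p w"] p w by simp
    moreover have "(k - p, i, j, drop p w) \<in> idx1 d (m - p)"
      using p w \<open>set (drop p w) \<subseteq> {..<d}\<close> unfolding idx1_def by auto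
    then have "\<bar>E (k - p, i, j, drop p w)\<bar> \<le> \<beta> (m - p) * L ^ (m - p - r)"
      by (rule tens1_dominatedD[OF E])
    ultimately have "\<bar>a (take p w)\<bar> * \<bar>E (k - p, i, j, drop p w)\<bar>
        \<le> (\<alpha> p * L ^ p) * (\<beta> (m - p) * L ^ (m - p - r))"
      using assms(4-6) by (intro mult_mono) auto
    also have "\<dots> = \<alpha> p * \<beta> (m - p) * L ^ (p + (m - p - r))"
      by (simp add: power_add mult_ac)
    also have "p + (m - p - r) = m - r"
      using p w assms(3) by auto
    finally show "\<bar>a (take p w)\<bar> * \<bar>E (k - p, i, j, drop p w)\<bar> \<le> \<alpha> p * \<beta> (m - p) * L ^ (m - r)" .
  qed
  also have "\<dots> \<le> (\<Sum>p\<le>m. \<alpha> p * \<beta> (m - p) * L ^ (m - r))"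
    using w assms(4-6) by (intro sum_mono2) auto
  finally show "\<bar>lact a E \<iota>\<bar> \<le> (\<Sum>p\<le>m. \<alpha> p * \<beta> (m - p)) * L ^ (m - r)"
    by (simp add: sum_distrib_right)
qed

lemma ract_dominated:
  assumes E: "tens1_dominated d \<beta> L r E" and b: "tens_dominated d \<alpha> L b"
    and "r \<le> 2" "0 \<le> L" "\<forall>p. 0 \<le> \<alpha> p" "\<forall>m. 0 \<le> \<beta> m"
  shows "tens1_dominated d (\<lambda>m. \<Sum>q\<le>m. \<beta> (m - q) * \<alpha> q) L r (ract E b)"
  unfolding tens1_dominated_def
proof (intro allI impI)
  fix m \<iota> assume "\<iota> \<in> idx1 d m"
  then obtain k i j w where \<iota>: "\<iota> = (k, i, j, w)" and w: "i < j" "j < d" "set w \<subseteq> {..<d}"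
    "length w + 2 = m" "k \<le> length w"
    unfolding idx1_def by auto
  let ?n = "length w"
  have "\<bar>ract E b \<iota>\<bar>
      \<le> (\<Sum>q\<le>?n - k. \<bar>E (k, i, j, take (?n - q) w)\<bar> * \<bar>b (drop (?n - q) w)\<bar>)"
    unfolding \<iota> ract_def abs_mult[symmetric] by simp
  also have "\<dots> \<le> (\<Sum>q\<le>?n - k. \<beta> (m - q) * \<alpha> q * L ^ (m - r))"
  proof (rule sum_mono)
    fix q assume q: "q \<in> {..?n - k}"
    have "set (take (?n - q) w) \<subseteq> {..<d}" "set (drop (?n - q) w) \<subseteq> {..<d}"
      using w(3) set_take_subset[of "?n - q" w] set_drop_subset[of "?n - q" w] by blast+
    moreover have "length (drop (?n - q) w) = q"
      using q w by auto
    ultimately have "\<bar>b (drop (?n - q) w)\<bar> \<le> \<alpha> q * L ^ q"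
      using tens_dominatedD[OF b, of "drop (?n - q) w"] by simp
    moreover have "(k, i, j, take (?n - q) w) \<in> idx1 d (m - q)"
      using q w \<open>set (take (?n - q) w) \<subseteq> {..<d}\<close> unfolding idx1_def by auto
    then have "\<bar>E (k, i, j, take (?n - q) w)\<bar> \<le> \<beta> (m - q) * L ^ (m - q - r)"
      by (rule tens1_dominatedD[OF E])
    ultimately have "\<bar>E (k, i, j, take (?n - q) w)\<bar> * \<bar>b (drop (?n - q) w)\<bar>
        \<le> (\<beta> (m - q) * L ^ (m - q - r)) * (\<alpha> q * L ^ q)"
      using assms(4-6) by (intro mult_mono) auto
    also have "\<dots> = \<beta> (m - q) * \<alpha> q * L ^ ((m - q - r) + q)"
      by (simp add: power_add mult_ac)
    also have "(m - q - r) + q = m - r"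
      using q w assms(3) by auto
    finally show "\<bar>E (k, i, j, take (?n - q) w)\<bar> * \<bar>b (drop (?n - q) w)\<bar>
        \<le> \<beta> (m - q) * \<alpha> q * L ^ (m - r)" .
  qed
  also have "\<dots> \<le> (\<Sum>q\<le>m. \<beta> (m - q) * \<alpha> q * L ^ (m - r))"
    using w assms(4-6) by (intro sum_mono2) auto
  finally show "\<bar>ract E b \<iota>\<bar> \<le> (\<Sum>q\<le>m. \<beta> (m - q) * \<alpha> q) * L ^ (m - r)"
    by (simp add: sum_distrib_right)
qed

lemma delta_dominated:
  assumes "tens1_dominated d \<beta> L 0 E"
  shows "tens_dominated d (\<lambda>n. real (card (idx1 d n)) * \<beta> n) L (delta d E)"
  unfolding tens_dominated_def
proof (intro allI impI)
  fix u :: word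
  have "\<bar>E \<iota> * basis_delta \<iota> u\<bar> \<le> \<beta> (length u) * L ^ length u"
    if \<iota>: "\<iota> \<in> idx1 d (length u)" for \<iota>
  proof -
    have "\<bar>basis_delta \<iota> u\<bar> \<le> 1"
      using \<iota> by (auto simp: basis_delta_def idx1_def)
    then have "\<bar>E \<iota> * basis_delta \<iota> u\<bar> \<le> \<bar>E \<iota>\<bar>"
      by (simp add: abs_mult mult_left_le)
    also have "\<dots> \<le> \<beta> (length u) * L ^ length u"
      using tens1_dominatedD[OF assms \<iota>] by simp
    finally show ?thesis .
  qed
  then have "(\<Sum>\<iota>\<in>idx1 d (length u). \<bar>E \<iota> * basis_delta \<iota> u\<bar>)
      \<le> (\<Sum>\<iota>\<in>idx1 d (length u). \<beta> (length u) * L ^ length u)"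
    by (rule sum_mono)
  then have "\<bar>delta d E u\<bar> \<le> (\<Sum>\<iota>\<in>idx1 d (length u). \<beta> (length u) * L ^ length u)"
    unfolding delta_def by (rule order_trans[OF sum_abs])
  then show "\<bar>delta d E u\<bar> \<le> real (card (idx1 d (length u))) * \<beta> (length u) * L ^ length u"
    by simp
qed

lemma tens1_dominated_add:
  assumes "tens1_dominated d \<beta> L r E" "tens1_dominated d \<beta>' L r F"
  shows "tens1_dominated d (\<lambda>m. \<beta> m + \<beta>' m) L r (\<lambda>\<iota>. E \<iota> + F \<iota>)"
  unfolding tens1_dominated_def
proof (intro allI impI)
  fix m \<iota> assume "\<iota> \<in> idx1 d m"
  then have "\<bar>E \<iota>\<bar> \<le> \<beta> m * L ^ (m - r)" "\<bar>F \<iota>\<bar> \<le> \<beta>' m * L ^ (m - r)"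
    using assms by (simp_all add: tens1_dominatedD)
  then show "\<bar>E \<iota> + F \<iota>\<bar> \<le> (\<beta> m + \<beta>' m) * L ^ (m - r)"
    using abs_triangle_ineq[of "E \<iota>" "F \<iota>"] by (simp add: distrib_right)
qed

lemma tens1_dominated_restrict:
  assumes "tens1_dominated d \<beta> L r E" "\<forall>m. 0 \<le> \<beta> m" "0 \<le> L"
  shows "tens1_dominated d \<beta> L r (\<lambda>\<iota>. if P \<iota> then E \<iota> else 0)"
  unfolding tens1_dominated_def
proof (intro allI impI)
  fix m \<iota> assume "\<iota> \<in> idx1 d m"
  then show "\<bar>if P \<iota> then E \<iota> else 0\<bar> \<le> \<beta> m * L ^ (m - r)"
    using assms tens1_dominatedD[OF assms(1)] by simp
qed

lemma tens1_dominated_integral: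
  assumes f: "\<And>x. x \<in> {c..t} \<Longrightarrow> tens1_dominated d \<beta> L (Suc r) (f x)"
    and "c \<le> t" "t - c \<le> L" "r \<le> 1" "\<forall>m. 0 \<le> \<beta> m"
  shows "tens1_dominated d \<beta> L r (\<lambda>\<iota>. integral {c..t} (\<lambda>x. f x \<iota>))"
  unfolding tens1_dominated_def
proof (intro allI impI)
  fix m \<iota> assume \<iota>: "\<iota> \<in> idx1 d m"
  have L: "0 \<le> L"
    using assms(2,3) by linarith
  have "\<bar>integral {c..t} (\<lambda>x. f x \<iota>)\<bar> \<le> \<beta> m * L ^ (m - Suc r) * (t - c)"
    using f \<iota> assms(2,5) L by (intro abs_integral_le_bound[where S = "{}"]) (auto intro: tens1_dominatedD)
  also have "\<dots> \<le> \<beta> m * L ^ (m - Suc r) * L"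
    using assms(3,5) L by (intro mult_left_mono) auto
  also have "\<dots> = \<beta> m * L ^ (m - r)"
    using idx1_level_ge2[OF \<iota>] assms(4) by (simp add: Suc_diff_Suc power_Suc2[symmetric] mult.assoc)
  finally show "\<bar>integral {c..t} (\<lambda>x. f x \<iota>)\<bar> \<le> \<beta> m * L ^ (m - r)" .
qed

lemma act_dominated:
  assumes g: "tens_dominated d (\<lambda>p. M ^ p) L g" and E: "tens1_dominated d \<beta> L r E"
    and "r \<le> 2" "0 \<le> M" "0 \<le> L" "\<forall>m. 0 \<le> \<beta> m"
  shows "tens1_dominated d (\<lambda>m. \<Sum>q\<le>m. (\<Sum>p\<le>m - q. M ^ p * \<beta> (m - q - p)) * (2 * M) ^ q)
    L r (act g E)"
proof -
  have "tens_dominated d (\<lambda>q. (2 * M) ^ q) L (tinv g)"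
    unfolding tens_dominated_def
  proof (intro allI impI)
    fix u :: word assume "set u \<subseteq> {..<d}"
    then have "\<bar>tinv g u\<bar> \<le> (2 * (M * L)) ^ length u"
      using g assms(4,5) by (intro abs_tinv_le) (auto simp: tens_dominated_def power_mult_distrib)
    then show "\<bar>tinv g u\<bar> \<le> (2 * M) ^ length u * L ^ length u"
      by (simp add: power_mult_distrib)
  qed
  moreover have "tens1_dominated d (\<lambda>m. \<Sum>p\<le>m. M ^ p * \<beta> (m - p)) L r (lact g E)"
    using assms by (intro lact_dominated) auto
  ultimately show ?thesis
    unfolding act_def using assms(3-6)
    ract_dominated[of d "\<lambda>m. \<Sum>p\<le>m. M ^ p * \<beta> (m - p)" L r "lact g E" "\<lambda>q. (2 * M) ^ q" "tinv g"]
    by (simp add: sum_nonneg)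
qed

lemma abs_sigr_le:
  assumes "0 \<le> M" "finite S"
    and D: "\<And>i v. i < d \<Longrightarrow> v \<in> {a..l} - S \<Longrightarrow> \<bar>deriv (x i) v\<bar> \<le> M"
  shows "set w \<subseteq> {..<d} \<Longrightarrow> u \<in> {a..l} \<Longrightarrow> \<bar>sigr x a u w\<bar> \<le> (M * (u - a)) ^ length w"
proof (induction w arbitrary: u)
  case Nil
  then show ?case by simp
next
  case (Cons i w)
  have "\<bar>integral {a..u} (\<lambda>v. sigr x a v w * deriv (x i) v)\<bar> \<le> (M * (u - a)) ^ length w * M * (u - a)"
  proof (rule abs_integral_le_bound[OF _ _ \<open>finite S\<close>])
    fix v assume v: "v \<in> {a..u} - S"
    have "\<bar>sigr x a v w\<bar> \<le> (M * (v - a)) ^ length w"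
      using Cons v by auto
    also have "\<dots> \<le> (M * (u - a)) ^ length w"
      using v \<open>0 \<le> M\<close> by (intro power_mono mult_left_mono) auto
    finally show "\<bar>sigr x a v w * deriv (x i) v\<bar> \<le> (M * (u - a)) ^ length w * M"
      unfolding abs_mult using D[of i v] Cons.prems v by (intro mult_mono) auto
  qed (use Cons.prems \<open>0 \<le> M\<close> in auto)
  then show ?case
    by (simp add: algebra_simps)
qed

lemma sig_dominated:
  assumes "0 \<le> M" "finite S"
    and "\<And>i v. i < d \<Longrightarrow> v \<in> {a..l} - S \<Longrightarrow> \<bar>deriv (x i) v\<bar> \<le> M"
    and "a \<le> l" "l - a \<le> L"
  shows "tens_dominated d (\<lambda>p. M ^ p) L (sig x a l)"
  unfolding tens_dominated_def
proof (intro allI impI)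
  fix w :: word assume "set w \<subseteq> {..<d}"
  then have "\<bar>sigr x a l (rev w)\<bar> \<le> (M * (l - a)) ^ length (rev w)"
    using assms by (intro abs_sigr_le[where d = d and S = S]) auto
  then have "\<bar>sig x a l w\<bar> \<le> (M * (l - a)) ^ length w"
    by (simp add: sig_def)
  also have "\<dots> \<le> (M * L) ^ length w"
    using assms by (intro power_mono mult_left_mono) auto
  finally show "\<bar>sig x a l w\<bar> \<le> M ^ length w * L ^ length w"
    by (simp add: power_mult_distrib)
qed

lemma deriv_tailpath_horizontal:
  assumes "v < s - sm" "(\<lambda>s'. X i (s', tm)) differentiable (at (v + sm))"
  shows "deriv (tailpath X sm tm s t i) v = deriv (\<lambda>s'. X i (s', tm)) (v + sm)"
proof -
  let ?f = "\<lambda>s'. X i (s', tm)"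
  have "(?f has_field_derivative deriv ?f (v + sm)) (at (v + sm))"
    using assms(2) by (simp add: DERIV_deriv_iff_real_differentiable)
  then have "((\<lambda>u. ?f (u + sm)) has_field_derivative deriv ?f (v + sm)) (at v)"
    by (simp add: DERIV_shift)
  then have "(tailpath X sm tm s t i has_field_derivative deriv ?f (v + sm)) (at v)"
    by (rule has_field_derivative_transform_within_open[where S = "{..<s - sm}"])
       (use assms(1) in \<open>auto simp: tailpath_def\<close>)
  then show ?thesis
    by (rule DERIV_imp_deriv)
qed

lemma deriv_tailpath_vertical:
  assumes "s - sm < v" "(\<lambda>t'. X i (s, t')) differentiable (at (v - (s - sm) + tm))"
  shows "deriv (tailpath X sm tm s t i) v = deriv (\<lambda>t'. X i (s, t')) (v - (s - sm) + tm)"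
proof -
  let ?f = "\<lambda>t'. X i (s, t')"
  have "(?f has_field_derivative deriv ?f (v - (s - sm) + tm)) (at (v + (tm - (s - sm))))"
    using assms(2) by (simp add: DERIV_deriv_iff_real_differentiable algebra_simps)
  then have "((\<lambda>u. ?f (u + (tm - (s - sm)))) has_field_derivative deriv ?f (v - (s - sm) + tm)) (at v)"
    by (simp add: DERIV_shift)
  then have "(tailpath X sm tm s t i has_field_derivative deriv ?f (v - (s - sm) + tm)) (at v)"
    by (rule has_field_derivative_transform_within_open[where S = "{s - sm<..}"])
       (use assms(1) in \<open>auto simp: tailpath_def algebra_simps\<close>)
  then show ?thesis
    by (rule DERIV_imp_deriv)
qed

lemma qnorm_le_sum_abs: "qnorm d n E \<le> (\<Sum>\<iota>\<in>idx1 d n. \<bar>E \<iota>\<bar>)"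
proof -
  have "qnorm d n E \<le> norm1 d n (\<lambda>\<iota>. E \<iota> - 0)"
    unfolding qnorm_def
  proof (rule cInf_lower)
    show "norm1 d n (\<lambda>\<iota>. E \<iota> - 0) \<in> {norm1 d n (\<lambda>\<iota>. E \<iota> - P \<iota>) |P. P \<in> Pf d}"
      by (intro CollectI exI[of _ "\<lambda>\<iota>. 0"]) (simp add: Pf.Pf_zero)
    show "bdd_below {norm1 d n (\<lambda>\<iota>. E \<iota> - P \<iota>) |P. P \<in> Pf d}"
      by (rule bdd_belowI[of _ 0]) (auto simp: norm1_def intro!: sum_nonneg)
  qed
  also have "\<dots> = L2_set E (idx1 d n)"
    by (simp add: norm1_def L2_set_def)
  also have "\<dots> \<le> (\<Sum>\<iota>\<in>idx1 d n. \<bar>E \<iota>\<bar>)"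
    by (rule L2_set_le_sum_abs)
  finally show ?thesis .
qed

lemma qnorm_le_dominated:
  assumes "tens1_dominated d \<beta> L 0 E"
  shows "qnorm d n E \<le> real (card (idx1 d n)) * \<beta> n * L ^ n"
proof -
  have "(\<Sum>\<iota>\<in>idx1 d n. \<bar>E \<iota>\<bar>) \<le> (\<Sum>\<iota>\<in>idx1 d n. \<beta> n * L ^ n)"
  proof (rule sum_mono)
    fix \<iota> assume "\<iota> \<in> idx1 d n"
    then show "\<bar>E \<iota>\<bar> \<le> \<beta> n * L ^ n"
      using tens1_dominatedD[OF assms] by fastforce
  qed
  then show ?thesis
    using qnorm_le_sum_abs[of d n E] by simp
qed

locale bounded_first_partials =
  fixes d :: nat and X :: "nat \<Rightarrow> real \<times> real \<Rightarrow> real" and sm sp tm tp M :: real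
  assumes M_nonneg: "0 \<le> M"
    and deriv_s_bounded: "\<And>i s t. i < d \<Longrightarrow> (s, t) \<in> {sm..sp} \<times> {tm..tp} \<Longrightarrow>
      \<bar>deriv (\<lambda>s'. X i (s', t)) s\<bar> \<le> M"
    and deriv_t_bounded: "\<And>i s t. i < d \<Longrightarrow> (s, t) \<in> {sm..sp} \<times> {tm..tp} \<Longrightarrow>
      \<bar>deriv (\<lambda>t'. X i (s, t')) t\<bar> \<le> M"
    and differentiable_s: "\<And>i s t. i < d \<Longrightarrow> (s, t) \<in> {sm..sp} \<times> {tm..tp} \<Longrightarrow>
      (\<lambda>s'. X i (s', t)) differentiable (at s)"
    and differentiable_t: "\<And>i s t. i < d \<Longrightarrow> (s, t) \<in> {sm..sp} \<times> {tm..tp} \<Longrightarrow>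
      (\<lambda>t'. X i (s, t')) differentiable (at t)"
begin

definition subrect :: "real \<Rightarrow> real \<Rightarrow> real \<Rightarrow> real \<Rightarrow> bool" where
  "subrect a b c e \<longleftrightarrow> sm \<le> a \<and> a \<le> b \<and> b \<le> sp \<and> tm \<le> c \<and> c \<le> e \<and> e \<le> tp"

lemma abs_deriv_tailpath_le:
  assumes "sm \<le> a" "a \<le> s" "s \<le> sp" "tm \<le> c" "c \<le> t" "t \<le> tp" "i < d"
    and v: "v \<in> {0..(s - a) + (t - c)} - {s - a}"
  shows "\<bar>deriv (tailpath X a c s t i) v\<bar> \<le> M"
proof (cases "v < s - a")
  case True
  have R: "(v + a, c) \<in> {sm..sp} \<times> {tm..tp}"
    using True assms by auto
  have "deriv (tailpath X a c s t i) v = deriv (\<lambda>s'. X i (s', c)) (v + a)"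
    using True differentiable_s[OF \<open>i < d\<close> R] by (rule deriv_tailpath_horizontal)
  then show ?thesis
    using deriv_s_bounded[OF \<open>i < d\<close> R] by simp
next
  case False
  then have "s - a < v"
    using v by auto
  have R: "(s, v - (s - a) + c) \<in> {sm..sp} \<times> {tm..tp}"
    using \<open>s - a < v\<close> assms by auto
  have "deriv (tailpath X a c s t i) v = deriv (\<lambda>t'. X i (s, t')) (v - (s - a) + c)"
    using \<open>s - a < v\<close> differentiable_t[OF \<open>i < d\<close> R] by (rule deriv_tailpath_vertical)
  then show ?thesis
    using deriv_t_bounded[OF \<open>i < d\<close> R] by simp
qed

lemma Jst_dominated:
  assumes "(s, t) \<in> {sm..sp} \<times> {tm..tp}" "0 \<le> L"
  shows "tens1_dominated d (\<lambda>_. 2 * M ^ 2) L 2 (Jst d X s t)"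
  unfolding tens1_dominated_def
proof (intro allI impI)
  fix m \<iota> assume \<iota>: "\<iota> \<in> idx1 d m"
  obtain k i j w where \<iota>_eq: "\<iota> = (k, i, j, w)"
    by (cases \<iota>) auto
  show "\<bar>Jst d X s t \<iota>\<bar> \<le> 2 * M ^ 2 * L ^ (m - 2)"
  proof (cases "k = 0 \<and> w = [] \<and> i < j \<and> j < d")
    case True
    then have "m = 2"
      using \<iota> \<iota>_eq unfolding idx1_def by auto
    let ?si = "deriv (\<lambda>s'. X i (s', t)) s" and ?ti = "deriv (\<lambda>t'. X i (s, t')) t"
    let ?sj = "deriv (\<lambda>s'. X j (s', t)) s" and ?tj = "deriv (\<lambda>t'. X j (s, t')) t"
    have "\<bar>?si * ?tj - ?sj * ?ti\<bar> \<le> \<bar>?si\<bar> * \<bar>?tj\<bar> + \<bar>?sj\<bar> * \<bar>?ti\<bar>"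
      by (simp add: abs_mult[symmetric] abs_triangle_ineq4)
    also have "\<dots> \<le> M * M + M * M"
      using True assms(1) deriv_s_bounded deriv_t_bounded M_nonneg by (intro add_mono mult_mono) auto
    finally show ?thesis
      using True \<open>m = 2\<close> by (simp add: Jst_def \<iota>_eq power2_eq_square)
  next
    case False
    then show ?thesis
      using M_nonneg assms(2) by (auto simp: Jst_def \<iota>_eq)
  qed
qed

definition act_weight :: "nat \<Rightarrow> real" where
  "act_weight m = (\<Sum>q\<le>m. (\<Sum>p\<le>m - q. M ^ p * (2 * M ^ 2)) * (2 * M) ^ q)"

lemma act_weight_nonneg: "0 \<le> act_weight m"
  unfolding act_weight_def using M_nonneg by (intro sum_nonneg mult_nonneg_nonneg) auto

lemma act_sig_Jst_dominated:
  assumes "subrect a b c e" "s \<in> {a..b}" "t \<in> {c..e}"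
  shows "tens1_dominated d act_weight ((b - a) + (e - c)) 2
    (act (sig (tailpath X a c s t) 0 ((s - a) + (t - c))) (Jst d X s t))"
proof -
  let ?L = "(b - a) + (e - c)"
  have bounds: "sm \<le> a" "a \<le> s" "s \<le> sp" "tm \<le> c" "c \<le> t" "t \<le> tp" "0 \<le> ?L"
    using assms unfolding subrect_def by auto
  have "tens_dominated d (\<lambda>p. M ^ p) ?L (sig (tailpath X a c s t) 0 ((s - a) + (t - c)))"
  proof (rule sig_dominated[where S = "{s - a}"])
    fix i v assume "i < d" "v \<in> {0..(s - a) + (t - c)} - {s - a}"
    with bounds show "\<bar>deriv (tailpath X a c s t i) v\<bar> \<le> M"
      by (intro abs_deriv_tailpath_le)
  qed (use assms bounds M_nonneg in \<open>auto simp: subrect_def\<close>)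
  moreover have "tens1_dominated d (\<lambda>_. 2 * M ^ 2) ?L 2 (Jst d X s t)"
    using bounds by (intro Jst_dominated) auto
  ultimately show ?thesis
    unfolding act_weight_def[abs_def]
    by (rule act_dominated) (use bounds M_nonneg in auto)
qed

lemma Fst_dominated:
  assumes "subrect a b c e" "t \<in> {c..e}"
  shows "tens1_dominated d act_weight ((b - a) + (e - c)) 1 (Fst d X a c b t)"
  unfolding Fst_def
proof (rule tens1_dominated_integral)
  fix s assume "s \<in> {a..b}"
  then show "tens1_dominated d act_weight ((b - a) + (e - c)) (Suc 1)
      (act (sig (tailpath X a c s t) 0 ((s - a) + (t - c))) (Jst d X s t))"
    using act_sig_Jst_dominated[OF assms(1) _ assms(2)] by (simp add: numeral_2_eq_2)
qed (use assms act_weight_nonneg in \<open>auto simp: subrect_def\<close>)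

lemma Rc_Suc_dominated:
  assumes \<rho>: "\<And>t'. t' \<in> {c..e} \<Longrightarrow> tens1_dominated d \<rho> ((b - a) + (e - c)) 0 (Rc d X a b c n t')"
    and \<rho>_nonneg: "\<forall>m. 0 \<le> \<rho> m" and abce: "subrect a b c e" and t: "t \<in> {c..e}"
  shows "tens1_dominated d
    (\<lambda>m. act_weight m + (\<Sum>p\<le>m. real (card (idx1 d p)) * \<rho> p * act_weight (m - p)))
    ((b - a) + (e - c)) 0 (Rc d X a b c (Suc n) t)"
proof -
  let ?L = "(b - a) + (e - c)"
  let ?\<rho>' = "\<lambda>m. act_weight m + (\<Sum>p\<le>m. real (card (idx1 d p)) * \<rho> p * act_weight (m - p))"
  have L: "0 \<le> ?L" "t - c \<le> ?L"
    using abce t unfolding subrect_def by auto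
  have \<rho>'_nonneg: "\<forall>m. 0 \<le> ?\<rho>' m"
    using \<rho>_nonneg act_weight_nonneg by (auto intro!: add_nonneg_nonneg sum_nonneg)
  have "tens1_dominated d ?\<rho>' ?L 1
      (\<lambda>\<iota>. Fst d X a c b t' \<iota> + lact (delta d (Rc d X a b c n t')) (Fst d X a c b t') \<iota>)"
    if t': "t' \<in> {c..t}" for t'
  proof -
    have F: "tens1_dominated d act_weight ?L 1 (Fst d X a c b t')"
      using abce t t' by (intro Fst_dominated) auto
    have "tens_dominated d (\<lambda>p. real (card (idx1 d p)) * \<rho> p) ?L (delta d (Rc d X a b c n t'))"
      using t t' by (intro delta_dominated \<rho>) auto
    then have "tens1_dominated d (\<lambda>m. \<Sum>p\<le>m. real (card (idx1 d p)) * \<rho> p * act_weight (m - p))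
        ?L 1 (lact (delta d (Rc d X a b c n t')) (Fst d X a c b t'))"
      using F L \<rho>_nonneg act_weight_nonneg by (intro lact_dominated) auto
    then show ?thesis
      by (rule tens1_dominated_add[OF F])
  qed
  then have "tens1_dominated d ?\<rho>' ?L 0 (\<lambda>\<iota>. integral {c..t}
      (\<lambda>t'. Fst d X a c b t' \<iota> + lact (delta d (Rc d X a b c n t')) (Fst d X a c b t') \<iota>))"
    using t L \<rho>'_nonneg by (intro tens1_dominated_integral) auto
  then show ?thesis
    unfolding Rc.simps by (rule tens1_dominated_restrict[OF _ \<rho>'_nonneg L(1)])
qed

lemma Rc_dominated:
  "\<exists>\<rho>. (\<forall>m. 0 \<le> \<rho> m) \<and> (\<forall>a b c e t. subrect a b c e \<longrightarrow> t \<in> {c..e} \<longrightarrow>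
      tens1_dominated d \<rho> ((b - a) + (e - c)) 0 (Rc d X a b c n t))"
proof (induction n)
  case 0
  show ?case
    by (intro exI[of _ "\<lambda>_. 0"]) (simp add: tens1_dominated_def)
next
  case (Suc n)
  then obtain \<rho> where \<rho>_nonneg: "\<forall>m. 0 \<le> \<rho> m" and \<rho>: "\<And>a b c e t. subrect a b c e \<Longrightarrow>
      t \<in> {c..e} \<Longrightarrow> tens1_dominated d \<rho> ((b - a) + (e - c)) 0 (Rc d X a b c n t)"
    by blast
  let ?\<rho>' = "\<lambda>m. act_weight m + (\<Sum>p\<le>m. real (card (idx1 d p)) * \<rho> p * act_weight (m - p))"
  have "\<forall>m. 0 \<le> ?\<rho>' m"
    using \<rho>_nonneg act_weight_nonneg by (auto intro!: add_nonneg_nonneg sum_nonneg)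
  moreover have "tens1_dominated d ?\<rho>' ((b - a) + (e - c)) 0 (Rc d X a b c (Suc n) t)"
    if "subrect a b c e" "t \<in> {c..e}" for a b c e t
    by (rule Rc_Suc_dominated[OF \<rho>[OF that(1)] \<rho>_nonneg that])
  ultimately show ?case
    by (intro exI[of _ ?\<rho>'] conjI allI impI) blast+
qed

lemma qnorm_surf_sig_le:
  "\<exists>C>0. \<forall>a b c e. subrect a b c e \<longrightarrow>
    qnorm d n (surf_sig d X a b c e n) \<le> C * (\<bar>b - a\<bar> + \<bar>e - c\<bar>) ^ n"
proof -
  obtain \<rho> where "\<forall>m. 0 \<le> \<rho> m" and \<rho>: "\<forall>a b c e t. subrect a b c e \<longrightarrow> t \<in> {c..e} \<longrightarrow>
      tens1_dominated d \<rho> ((b - a) + (e - c)) 0 (Rc d X a b c n t)"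
    using Rc_dominated[of n] by blast
  define C where "C = real (card (idx1 d n)) * \<rho> n + 1"
  have "qnorm d n (surf_sig d X a b c e n) \<le> C * (\<bar>b - a\<bar> + \<bar>e - c\<bar>) ^ n"
    if abce: "subrect a b c e" for a b c e
  proof -
    have L: "\<bar>b - a\<bar> + \<bar>e - c\<bar> = (b - a) + (e - c)" "e \<in> {c..e}"
      using abce unfolding subrect_def by auto
    then have "qnorm d n (surf_sig d X a b c e n)
        \<le> real (card (idx1 d n)) * \<rho> n * ((b - a) + (e - c)) ^ n"
      unfolding surf_sig_def using \<rho> abce by (intro qnorm_le_dominated) blast
    also have "\<dots> \<le> C * ((b - a) + (e - c)) ^ n"
      unfolding C_def using abce unfolding subrect_def by (intro mult_right_mono) auto
    finally show ?thesis
      unfolding L .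
  qed
  moreover have "0 < C"
    unfolding C_def using \<open>\<forall>m. 0 \<le> \<rho> m\<close> by (simp add: add_nonneg_pos)
  ultimately show ?thesis
    by blast
qed

end

lemma smooth_on_pdiff_bounded:
  fixes d :: nat
  assumes "\<forall>i<d. smooth_on U (X i)" "compact K" "K \<subseteq> U" "finite B"
  shows "\<exists>M\<ge>0. \<forall>i<d. \<forall>bs\<in>B. \<forall>p\<in>K. \<bar>pdiff bs (X i) p\<bar> \<le> M"
proof -
  have "compact (pdiff bs (X i) ` K)" if "i < d" for i bs
  proof -
    have "continuous_on U (pdiff bs (X i))"
      using assms(1) that unfolding smooth_on_def by blast
    then show ?thesis
      using assms(2,3) by (metis compact_continuous_image continuous_on_subset)
  qed
  then have "bounded (\<Union>i<d. \<Union>bs\<in>B. pdiff bs (X i) ` K)"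
    using \<open>finite B\<close> by (intro compact_imp_bounded compact_UN) auto
  then obtain M where "M > 0" "\<forall>x\<in>(\<Union>i<d. \<Union>bs\<in>B. pdiff bs (X i) ` K). norm x \<le> M"
    unfolding bounded_pos by blast
  then show ?thesis
    by (intro exI[of _ M]) auto
qed

lemma smooth_on_bounded_first_partials:
  fixes d :: nat
  assumes "{sm..sp} \<times> {tm..tp} \<subseteq> U" "\<forall>i<d. smooth_on U (X i)"
  shows "\<exists>M. bounded_first_partials d X sm sp tm tp M"
proof -
  have "\<exists>M\<ge>0. \<forall>i<d. \<forall>bs\<in>{[True], [False]}. \<forall>p\<in>{sm..sp} \<times> {tm..tp}. \<bar>pdiff bs (X i) p\<bar> \<le> M"
    by (rule smooth_on_pdiff_bounded[OF assms(2) compact_Times[OF compact_Icc compact_Icc] assms(1)])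
       simp
  then obtain M where "0 \<le> M" and M: "\<forall>i<d. \<forall>bs\<in>{[True], [False]}.
      \<forall>p\<in>{sm..sp} \<times> {tm..tp}. \<bar>pdiff bs (X i) p\<bar> \<le> M"
    by blast
  have "bounded_first_partials d X sm sp tm tp M"
  proof
    fix i s t assume i: "i < d" and st: "(s, t) \<in> {sm..sp} \<times> {tm..tp}"
    have "\<bar>pdiff [True] (X i) (s, t)\<bar> \<le> M" "\<bar>pdiff [False] (X i) (s, t)\<bar> \<le> M"
      using M i st by blast+
    then show "\<bar>deriv (\<lambda>s'. X i (s', t)) s\<bar> \<le> M" "\<bar>deriv (\<lambda>t'. X i (s, t')) t\<bar> \<le> M"
      by simp_all
    have "smooth_on U (X i)" "(s, t) \<in> U"
      using assms i st by auto
    then have "(\<lambda>s'. pdiff [] (X i) (s', t)) differentiable (at s)"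
      "(\<lambda>t'. pdiff [] (X i) (s, t')) differentiable (at t)"
      unfolding smooth_on_def by blast+
    then show "(\<lambda>s'. X i (s', t)) differentiable (at s)" "(\<lambda>t'. X i (s, t')) differentiable (at t)"
      by simp_all
  qed fact
  then show ?thesis ..
qed

theorem proposition4p27:
  fixes d :: nat and X :: "nat \<Rightarrow> real \<times> real \<Rightarrow> real" and sm sp tm tp :: real
  assumes "sm < sp" and "tm < tp"
    and "\<exists>U. open U \<and> {sm..sp} \<times> {tm..tp} \<subseteq> U \<and> (\<forall>i<d. smooth_on U (X i))"
  shows "\<forall>n\<ge>2. \<exists>C>0. \<forall>a b c e. sm \<le> a \<and> a \<le> b \<and> b \<le> sp \<and> tm \<le> c \<and> c \<le> e \<and> e \<le> tp \<longrightarrow>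
           qnorm d n (surf_sig d X a b c e n) \<le> C * (\<bar>b - a\<bar> + \<bar>e - c\<bar>) ^ n"
proof (intro allI impI)
  fix n :: nat
  obtain U where "{sm..sp} \<times> {tm..tp} \<subseteq> U" "\<forall>i<d. smooth_on U (X i)"
    using assms(3) by blast
  then obtain M where "bounded_first_partials d X sm sp tm tp M"
    using smooth_on_bounded_first_partials by blast
  then interpret bounded_first_partials d X sm sp tm tp M .
  show "\<exists>C>0. \<forall>a b c e. sm \<le> a \<and> a \<le> b \<and> b \<le> sp \<and> tm \<le> c \<and> c \<le> e \<and> e \<le> tp \<longrightarrow>
      qnorm d n (surf_sig d X a b c e n) \<le> C * (\<bar>b - a\<bar> + \<bar>e - c\<bar>) ^ n"
    using qnorm_surf_sig_le[of n] unfolding subrect_def .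
qed

end
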